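(* Let $n\ge3$, let $S_n$ act on $V=\mathbb{C}^n$ by permutations, and fix $a,b\in\mathbb{C}$. Then $\phi(\kappa^L_{\mathrm{tri}},\kappa^L_{\mathrm{tri}})=2\psi(\kappa^C_{\mathrm{penta}})$.
   Context: $S_n$ acts by $\sigma e_i=e_{\sigma(i)}$; $V^g$ is the fixed space of $g$. $\kappa^L_{\mathrm{tri}}=\sum_g\kappa^L_gg$ is the linear 2-cochain supported on 3-cycles with $\kappa^L_{(ijk)}(e_i,e_j)=\kappa^L_{(ijk)}(e_j,e_k)=\kappa^L_{(ijk)}(e_k,e_i)=a(e_i+e_j+e_k)+b\sum_{l\notin\{i,j,k\}}e_l$ and $\kappa^L_{(ijk)}(e_l,e_m)=0$ whenever $e_l$ or $e_m$ lies in $V^{(ijk)}$. $\kappa^C_{\mathrm{penta}}=\sum_g\kappa^C_gg$ is the constant 2-cochain with $\kappa^C_g=0$ unless $g$ is a 5-cycle, and for a 5-cycle $g$, $\kappa^C_g(e_i,e_j)=(a-b)^2([g]_{ij}-[g]_{ji}-2[g^2]_{ij}+2[g^2]_{ji})$, where $[h]_{ij}=1$ if $i=h(j)$ and $0$ otherwise. For a 2-cochain $\alpha$, $\psi(\alpha)=\sum_g\psi_gg$ with $\psi_g(v_1,v_2,v_3)=\alpha_g(v_1,v_2)(gv_3-v_3)+\alpha_g(v_2,v_3)(gv_1-v_1)+\alpha_g(v_3,v_1)(gv_2-v_2)$; for $\alpha,\beta$ with $\beta$ linear, $\phi(\alpha,\beta)=\sum_g\phi_gg$, $\phi_g=\sum_{xy=g}\phi_{x,y}$,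 $\phi_{x,y}(v_1,v_2,v_3)=\alpha_x(v_1+yv_1,\beta_y(v_2,v_3))+\alpha_x(v_2+yv_2,\beta_y(v_3,v_1))+\alpha_x(v_3+yv_3,\beta_y(v_1,v_2))$. *)

theory Defs
  imports Complex_Main "HOL-Combinatorics.Cycles"
begin

text \<open>V = C^n is modelled as functions 'n \<Rightarrow> complex for a finite index type 'n
  with CARD('n) = n; S_n is the set of permutations g with g permutes UNIV,
  with product xy = x \<circ> y.  The basis vector e_i is the indicator of i.\<close>

type_synonym 'n vec = "'n \<Rightarrow> complex"

definition act :: "('n \<Rightarrow> 'n) \<Rightarrow> 'n vec \<Rightarrow> 'n vec" where
  "act g v = (\<lambda>j. v (inv g j))"   \<comment> \<open>so that g e_i = e_(g i)\<close>

definition is_3cycle :: "('n \<Rightarrow> 'n) \<Rightarrow> bool" where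
  "is_3cycle g \<longleftrightarrow> (\<exists>i j k. distinct [i, j, k] \<and> g = cycle_of_list [i, j, k])"

definition is_5cycle :: "('n \<Rightarrow> 'n) \<Rightarrow> bool" where
  "is_5cycle g \<longleftrightarrow> (\<exists>cs. length cs = 5 \<and> distinct cs \<and> g = cycle_of_list cs)"

text \<open>Values of kappa^L_g on pairs of basis vectors (e_p, e_q).  For g = (ijk) the
  pairs (e_p, e_(g p)) with p moved give a(e_i+e_j+e_k) + b sum_(l fixed) e_l,
  alternation gives the negatives on (e_(g p), e_p), and all pairs involving a
  fixed basis vector (or diagonal pairs) give 0.\<close>
definition kL_basis :: "complex \<Rightarrow> complex \<Rightarrow> ('n \<Rightarrow> 'n) \<Rightarrow> 'n \<Rightarrow> 'n \<Rightarrow> 'n vec" where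
  "kL_basis a b g p q =
     (if is_3cycle g \<and> g p \<noteq> p \<and> g q \<noteq> q then
        (if q = g p then (\<lambda>l. if g l \<noteq> l then a else b)
         else if p = g q then (\<lambda>l. - (if g l \<noteq> l then a else b))
         else (\<lambda>l. 0))
      else (\<lambda>l. 0))"

definition kL_tri :: "complex \<Rightarrow> complex \<Rightarrow> ('n::finite \<Rightarrow> 'n) \<Rightarrow> 'n vec \<Rightarrow> 'n vec \<Rightarrow> 'n vec" where
  "kL_tri a b g v w = (\<lambda>l. \<Sum>p\<in>UNIV. \<Sum>q\<in>UNIV. v p * w q * kL_basis a b g p q l)"

definition brk :: "('n \<Rightarrow> 'n) \<Rightarrow> 'n \<Rightarrow> 'n \<Rightarrow> complex" where
  "brk h i j = (if i = h j then 1 else 0)"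

definition kC_basis :: "complex \<Rightarrow> complex \<Rightarrow> ('n \<Rightarrow> 'n) \<Rightarrow> 'n \<Rightarrow> 'n \<Rightarrow> complex" where
  "kC_basis a b g i j =
     (if is_5cycle g then
        (a - b)^2 * (brk g i j - brk g j i - 2 * brk (g \<circ> g) i j + 2 * brk (g \<circ> g) j i)
      else 0)"

definition kC_penta :: "complex \<Rightarrow> complex \<Rightarrow> ('n::finite \<Rightarrow> 'n) \<Rightarrow> 'n vec \<Rightarrow> 'n vec \<Rightarrow> complex" where
  "kC_penta a b g v w = (\<Sum>i\<in>UNIV. \<Sum>j\<in>UNIV. v i * w j * kC_basis a b g i j)"

definition psi :: "(('n \<Rightarrow> 'n) \<Rightarrow> 'n vec \<Rightarrow> 'n vec \<Rightarrow> complex)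
     \<Rightarrow> ('n \<Rightarrow> 'n) \<Rightarrow> 'n vec \<Rightarrow> 'n vec \<Rightarrow> 'n vec \<Rightarrow> 'n vec" where
  "psi \<alpha> g v1 v2 v3 = (\<lambda>l.
      \<alpha> g v1 v2 * (act g v3 l - v3 l)
    + \<alpha> g v2 v3 * (act g v1 l - v1 l)
    + \<alpha> g v3 v1 * (act g v2 l - v2 l))"

definition phi_xy :: "(('n \<Rightarrow> 'n) \<Rightarrow> 'n vec \<Rightarrow> 'n vec \<Rightarrow> 'n vec)
     \<Rightarrow> (('n \<Rightarrow> 'n) \<Rightarrow> 'n vec \<Rightarrow> 'n vec \<Rightarrow> 'n vec)
     \<Rightarrow> ('n \<Rightarrow> 'n) \<Rightarrow> ('n \<Rightarrow> 'n) \<Rightarrow> 'n vec \<Rightarrow> 'n vec \<Rightarrow> 'n vec \<Rightarrow> 'n vec" where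
  "phi_xy \<alpha> \<beta> x y v1 v2 v3 = (\<lambda>l.
      \<alpha> x (\<lambda>m. v1 m + act y v1 m) (\<beta> y v2 v3) l
    + \<alpha> x (\<lambda>m. v2 m + act y v2 m) (\<beta> y v3 v1) l
    + \<alpha> x (\<lambda>m. v3 m + act y v3 m) (\<beta> y v1 v2) l)"

text \<open>phi_g = sum over x y = g in S_n, i.e. over y in S_n with x = g \<circ> y^(-1).\<close>
definition phi :: "(('n \<Rightarrow> 'n) \<Rightarrow> 'n vec \<Rightarrow> 'n vec \<Rightarrow> 'n vec)
     \<Rightarrow> (('n \<Rightarrow> 'n) \<Rightarrow> 'n vec \<Rightarrow> 'n vec \<Rightarrow> 'n vec)
     \<Rightarrow> ('n \<Rightarrow> 'n) \<Rightarrow> 'n vec \<Rightarrow> 'n vec \<Rightarrow> 'n vec \<Rightarrow> 'n vec" where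
  "phi \<alpha> \<beta> g v1 v2 v3 = (\<lambda>l.
      \<Sum>y\<in>{y. y permutes (UNIV :: 'n set)}. phi_xy \<alpha> \<beta> (g \<circ> inv y) y v1 v2 v3 l)"

end

theory Submission
  imports Defs
begin

text \<open>Only 3-cycles carry kappa^L, and for a 3-cycle (i j k) the value kappa^L(v, w) is
  the alternating form e_i \<and> e_j + e_j \<and> e_k + e_k \<and> e_i at (v, w) times the vector that is a on
  {i, j, k} and b elsewhere. Hence phi_(x,y) vanishes unless x and y are 3-cycles, and it also
  vanishes when their supports are disjoint or share two or three points: in the first and last
  case the weight vector of y is constant on the support of x, in the middle case the three
  cyclic terms cancel. So xy is a 5-cycle g = (t u1 u2 u3 u4) with x = (t u3 u4) and
  y = (t u1 u2); the five such factorisations of g contribute to phi_g, and expanding their sum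
  gives 2 psi(kappa^C)_g.\<close>

definition cyc3 :: "'n \<Rightarrow> 'n \<Rightarrow> 'n \<Rightarrow> 'n \<Rightarrow> 'n" where
  "cyc3 i j k = (\<lambda>m. if m = i then j else if m = j then k else if m = k then i else m)"

definition cyc5 :: "'n \<Rightarrow> 'n \<Rightarrow> 'n \<Rightarrow> 'n \<Rightarrow> 'n \<Rightarrow> 'n \<Rightarrow> 'n" where
  "cyc5 i j k p q = (\<lambda>m. if m = i then j else if m = j then k else if m = k then p
     else if m = p then q else if m = q then i else m)"

lemma cycle_of_list_3: "distinct [i, j, k] \<Longrightarrow> cycle_of_list [i, j, k] = cyc3 i j k"
  by (auto simp: fun_eq_iff cyc3_def transpose_def)

lemma cycle_of_list_5:
  "distinct [i, j, k, p, q] \<Longrightarrow> cycle_of_list [i, j, k, p, q] = cyc5 i j k p q"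
  by (auto simp: fun_eq_iff cyc5_def transpose_def)

lemma is_3cycle_iff: "is_3cycle g \<longleftrightarrow> (\<exists>i j k. distinct [i, j, k] \<and> g = cyc3 i j k)"
  unfolding is_3cycle_def by (metis cycle_of_list_3)

lemma is_5cycle_iff:
  "is_5cycle g \<longleftrightarrow> (\<exists>i j k p q. distinct [i, j, k, p, q] \<and> g = cyc5 i j k p q)"
proof -
  have "length cs = 5 \<longleftrightarrow> (\<exists>i j k p q. cs = [i, j, k, p, q])" for cs :: "'a list"
    by (auto simp: numeral_eq_Suc length_Suc_conv)
  then show ?thesis
    unfolding is_5cycle_def by (metis cycle_of_list_5)
qed

lemma inv_cyc3: "distinct [i, j, k] \<Longrightarrow> inv (cyc3 i j k) = cyc3 k j i"
  by (rule inv_unique_comp) (auto simp: fun_eq_iff cyc3_def)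

lemma inv_cyc5: "distinct [i, j, k, p, q] \<Longrightarrow> inv (cyc5 i j k p q) = cyc5 q p k j i"
  by (rule inv_unique_comp) (auto simp: fun_eq_iff cyc5_def)

lemma cyc3_permutes: "distinct [i, j, k] \<Longrightarrow> cyc3 i j k permutes UNIV"
  by (metis cycle_of_list_3 cycle_permutes permutes_subset subset_UNIV)

lemma cyc3_rotate_to:
  assumes "distinct [i, j, k]" "t \<in> {i, j, k}"
  obtains j' k' where "distinct [t, j', k']" "cyc3 i j k = cyc3 t j' k'"
proof -
  consider "t = i" | "t = j" | "t = k"
    using assms(2) by blast
  then show ?thesis
  proof cases
    case 1
    with assms(1) show ?thesis by (intro that[of j k]) auto
  next
    case 2
    with assms(1) show ?thesis by (intro that[of k i]) (auto simp: fun_eq_iff cyc3_def)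
  next
    case 3
    with assms(1) show ?thesis by (intro that[of i j]) (auto simp: fun_eq_iff cyc3_def)
  qed
qed

lemma cyc5_rotate_to:
  assumes "distinct [i, j, k, p, q]" "t \<in> {i, j, k, p, q}"
  obtains u1 u2 u3 u4 where "distinct [t, u1, u2, u3, u4]" "cyc5 i j k p q = cyc5 t u1 u2 u3 u4"
proof -
  consider "t = i" | "t = j" | "t = k" | "t = p" | "t = q"
    using assms(2) by blast
  then show ?thesis
  proof cases
    case 1
    with assms(1) show ?thesis by (intro that[of j k p q]) auto
  next
    case 2
    with assms(1) show ?thesis by (intro that[of k p q i]) (auto simp: fun_eq_iff cyc5_def)
  next
    case 3
    with assms(1) show ?thesis by (intro that[of p q i j]) (auto simp: fun_eq_iff cyc5_def)
  next
    case 4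
    with assms(1) show ?thesis by (intro that[of q i j k]) (auto simp: fun_eq_iff cyc5_def)
  next
    case 5
    with assms(1) show ?thesis by (intro that[of i j k p]) (auto simp: fun_eq_iff cyc5_def)
  qed
qed

lemma cyc3_comp_cyc3: "distinct [t, j, k, q, r] \<Longrightarrow> cyc3 t q r \<circ> cyc3 t j k = cyc5 t j k q r"
  by (auto simp: fun_eq_iff cyc3_def cyc5_def)

definition alt3 :: "'n \<Rightarrow> 'n \<Rightarrow> 'n \<Rightarrow> 'n vec \<Rightarrow> 'n vec \<Rightarrow> complex" where
  "alt3 i j k v w = v i * w j - v j * w i + v j * w k - v k * w j + v k * w i - v i * w k"

definition weight3 :: "complex \<Rightarrow> complex \<Rightarrow> 'n \<Rightarrow> 'n \<Rightarrow> 'n \<Rightarrow> 'n vec" where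
  "weight3 a b i j k = (\<lambda>l. if l = i \<or> l = j \<or> l = k then a else b)"

lemma alt3_const: "w i = c \<Longrightarrow> w j = c \<Longrightarrow> w k = c \<Longrightarrow> alt3 i j k v w = 0"
  by (simp add: alt3_def algebra_simps)

lemma kL_tri_cyc3:
  fixes i j k :: "'n::finite"
  assumes "distinct [i, j, k]"
  shows "kL_tri a b (cyc3 i j k) v w = (\<lambda>l. alt3 i j k v w * weight3 a b i j k l)"
proof
  fix l
  have is3: "is_3cycle (cyc3 i j k)"
    using assms is_3cycle_iff by blast
  let ?f = "\<lambda>p q. v p * w q * kL_basis a b (cyc3 i j k) p q l"
  have outside: "?f p q = 0" if "p \<notin> {i, j, k} \<or> q \<notin> {i, j, k}" for p q
    using that assms by (auto simp: kL_basis_def cyc3_def)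
  have "kL_tri a b (cyc3 i j k) v w l = (\<Sum>p\<in>{i, j, k}. \<Sum>q\<in>UNIV. ?f p q)"
    unfolding kL_tri_def by (rule sum.mono_neutral_right) (auto simp: outside)
  also have "\<dots> = (\<Sum>p\<in>{i, j, k}. \<Sum>q\<in>{i, j, k}. ?f p q)"
    by (intro sum.cong refl sum.mono_neutral_right) (auto simp: outside)
  also have "\<dots> = alt3 i j k v w * weight3 a b i j k l"
    using assms is3 by (auto simp: kL_basis_def cyc3_def alt3_def weight3_def algebra_simps)
  finally show "kL_tri a b (cyc3 i j k) v w l = alt3 i j k v w * weight3 a b i j k l" .
qed

lemma kL_tri_not_3cycle: "\<not> is_3cycle g \<Longrightarrow> kL_tri a b g v w = (\<lambda>l. 0)"
  by (simp add: kL_tri_def kL_basis_def)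

lemma kL_tri_zero_right: "kL_tri a b g v (\<lambda>l. 0) = (\<lambda>l. 0)"
  by (simp add: kL_tri_def)

definition tri_coeff ::
    "complex \<Rightarrow> complex \<Rightarrow> 'n \<Rightarrow> 'n \<Rightarrow> 'n \<Rightarrow> 'n \<Rightarrow> 'n \<Rightarrow> 'n \<Rightarrow>
      'n vec \<Rightarrow> 'n vec \<Rightarrow> 'n vec \<Rightarrow> complex"
  where
  "tri_coeff a b p q r i j k v1 v2 v3 =
      alt3 i j k v2 v3 * alt3 p q r (\<lambda>m. v1 m + v1 (cyc3 k j i m)) (weight3 a b i j k)
    + alt3 i j k v3 v1 * alt3 p q r (\<lambda>m. v2 m + v2 (cyc3 k j i m)) (weight3 a b i j k)
    + alt3 i j k v1 v2 * alt3 p q r (\<lambda>m. v3 m + v3 (cyc3 k j i m)) (weight3 a b i j k)"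

lemma phi_xy_cyc3:
  fixes i j k :: "'n::finite"
  assumes "distinct [i, j, k]" "distinct [p, q, r]"
  shows "phi_xy (kL_tri a b) (kL_tri a b) (cyc3 p q r) (cyc3 i j k) v1 v2 v3 l
    = weight3 a b p q r l * tri_coeff a b p q r i j k v1 v2 v3"
proof -
  have "alt3 p q r u (\<lambda>m. c * z m) = c * alt3 p q r u z" for u c z
    by (simp add: alt3_def algebra_simps)
  with assms show ?thesis
    by (simp add: phi_xy_def kL_tri_cyc3 act_def inv_cyc3 tri_coeff_def algebra_simps)
qed

lemma tri_coeff_disjoint:
  assumes "{p, q, r} \<inter> {i, j, k} = {}"
  shows "tri_coeff a b p q r i j k v1 v2 v3 = 0"
proof -
  have "alt3 p q r u (weight3 a b i j k) = 0" for u
    by (rule alt3_const[where c = b]) (use assms in \<open>auto simp: weight3_def\<close>)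
  then show ?thesis
    by (simp add: tri_coeff_def)
qed

lemma tri_coeff_same_support:
  assumes "{p, q, r} = {i, j, k}"
  shows "tri_coeff a b p q r i j k v1 v2 v3 = 0"
proof -
  have "alt3 p q r u (weight3 a b i j k) = 0" for u
    by (rule alt3_const[where c = a]) (use assms in \<open>auto simp: weight3_def\<close>)
  then show ?thesis
    by (simp add: tri_coeff_def)
qed

lemma tri_coeff_two_common:
  assumes "distinct [i, j, k]" "distinct [i, q, r]"
    and "{q, r} \<inter> {j, k} \<noteq> {}" "{q, r} \<noteq> {j, k}"
  shows "tri_coeff a b i q r i j k v1 v2 v3 = 0"
proof -
  have ne [simp]: "j \<noteq> i" "k \<noteq> i" "k \<noteq> j" "q \<noteq> i" "r \<noteq> i" "r \<noteq> q"
    "i \<noteq> j" "i \<noteq> k" "j \<noteq> k" "i \<noteq> q" "i \<noteq> r" "q \<noteq> r"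
    using assms(1,2) by auto
  from assms(3,4) ne consider "q = j" "r \<noteq> j" "r \<noteq> k" | "q = k" "r \<noteq> j" "r \<noteq> k"
    | "r = j" "q \<noteq> j" "q \<noteq> k" | "r = k" "q \<noteq> j" "q \<noteq> k"
    by (cases "q = j"; cases "q = k"; cases "r = j"; cases "r = k") (auto simp: insert_commute)
  then show ?thesis
    by cases (simp_all add: tri_coeff_def alt3_def weight3_def cyc3_def algebra_simps)
qed

lemma phi_xy_cyc3_nonzero:
  fixes i j k :: "'n::finite"
  assumes "distinct [i, j, k]" "distinct [p, q, r]"
    and nonzero: "phi_xy (kL_tri a b) (kL_tri a b) (cyc3 p q r) (cyc3 i j k) v1 v2 v3 l \<noteq> 0"
  obtains t j' k' q' r' where "distinct [t, j', k', q', r']" "cyc3 i j k = cyc3 t j' k'"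
    "cyc3 p q r \<circ> cyc3 i j k = cyc5 t j' k' q' r'"
proof -
  have "tri_coeff a b p q r i j k v1 v2 v3 \<noteq> 0"
    using nonzero by (simp add: phi_xy_cyc3[OF assms(1,2)])
  then obtain t where t: "t \<in> {i, j, k}" "t \<in> {p, q, r}"
    by (meson disjoint_iff tri_coeff_disjoint)
  obtain j' k' where y: "distinct [t, j', k']" "cyc3 i j k = cyc3 t j' k'"
    by (rule cyc3_rotate_to[OF assms(1) t(1)])
  obtain q' r' where x: "distinct [t, q', r']" "cyc3 p q r = cyc3 t q' r'"
    by (rule cyc3_rotate_to[OF assms(2) t(2)])
  have "tri_coeff a b t q' r' t j' k' v1 v2 v3 \<noteq> 0"
    using nonzero x(2) y(2) by (simp add: phi_xy_cyc3[OF y(1) x(1)])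
  moreover have "tri_coeff a b t q' r' t j' k' v1 v2 v3 = 0" if "{q', r'} = {j', k'}"
    by (rule tri_coeff_same_support) (simp add: that)
  ultimately have "{q', r'} \<inter> {j', k'} = {}"
    using tri_coeff_two_common[OF y(1) x(1)] by blast
  then have dist: "distinct [t, j', k', q', r']"
    using x(1) y(1) by auto
  show ?thesis
    using that[OF dist y(2)] cyc3_comp_cyc3[OF dist] x(2) y(2) by simp
qed

lemma phi_xy_nonzero:
  fixes g y :: "'n::finite \<Rightarrow> 'n"
  assumes nonzero: "phi_xy (kL_tri a b) (kL_tri a b) (g \<circ> inv y) y v1 v2 v3 l \<noteq> 0"
  obtains t y1 y2 x1 x2 where "distinct [t, y1, y2, x1, x2]" "y = cyc3 t y1 y2"
    "g = cyc5 t y1 y2 x1 x2"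
proof -
  have "is_3cycle y"
    using nonzero by (rule contrapos_np) (simp add: phi_xy_def kL_tri_not_3cycle kL_tri_zero_right)
  moreover have "is_3cycle (g \<circ> inv y)"
    using nonzero by (rule contrapos_np) (simp add: phi_xy_def kL_tri_not_3cycle)
  ultimately obtain i j k p q r where y: "distinct [i, j, k]" "y = cyc3 i j k"
    and x: "distinct [p, q, r]" "g \<circ> inv y = cyc3 p q r"
    unfolding is_3cycle_iff by blast
  have "g = (g \<circ> inv y) \<circ> y"
    using cyc3_permutes[OF y(1)] y(2) by (simp add: comp_assoc permutes_inv_o(2))
  then have g: "g = cyc3 p q r \<circ> cyc3 i j k"
    using x(2) y(2) by simp
  obtain t j' k' q' r' where "distinct [t, j', k', q', r']" "cyc3 i j k = cyc3 t j' k'"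
    "cyc3 p q r \<circ> cyc3 i j k = cyc5 t j' k' q' r'"
    using phi_xy_cyc3_nonzero[OF y(1) x(1)] nonzero x(2) y(2) by metis
  then show ?thesis
    using that g y(2) by metis
qed

lemma sum_brk: "(\<Sum>i\<in>UNIV. \<Sum>j\<in>UNIV. v i * w j * brk h i j) = (\<Sum>j\<in>UNIV. v (h j) * w j)"
  for v w :: "'n::finite vec"
  by (subst sum.swap) (simp add: brk_def if_distrib cong: if_cong)

lemma sum_brk_swap: "(\<Sum>i\<in>UNIV. \<Sum>j\<in>UNIV. v i * w j * brk h j i) = (\<Sum>i\<in>UNIV. v i * w (h i))"
  for v w :: "'n::finite vec"
  by (simp add: brk_def if_distrib cong: if_cong)

lemma kC_penta_5cycle:
  fixes g :: "'n::finite \<Rightarrow> 'n"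
  assumes "is_5cycle g"
  shows "kC_penta a b g v w = (a - b)^2 * (\<Sum>j\<in>UNIV.
    v (g j) * w j - v j * w (g j) - 2 * (v (g (g j)) * w j) + 2 * (v j * w (g (g j))))"
proof -
  have "kC_penta a b g v w = (\<Sum>i\<in>UNIV. \<Sum>j\<in>UNIV. (a - b)^2 * (v i * w j * brk g i j
      - v i * w j * brk g j i - 2 * (v i * w j * brk (g \<circ> g) i j) + 2 * (v i * w j * brk (g \<circ> g) j i)))"
    unfolding kC_penta_def kC_basis_def using assms by (simp add: algebra_simps)
  also have "\<dots> = (a - b)^2 * ((\<Sum>i\<in>UNIV. \<Sum>j\<in>UNIV. v i * w j * brk g i j)
      - (\<Sum>i\<in>UNIV. \<Sum>j\<in>UNIV. v i * w j * brk g j i)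
      - 2 * (\<Sum>i\<in>UNIV. \<Sum>j\<in>UNIV. v i * w j * brk (g \<circ> g) i j)
      + 2 * (\<Sum>i\<in>UNIV. \<Sum>j\<in>UNIV. v i * w j * brk (g \<circ> g) j i))"
    by (simp only: sum_distrib_left[symmetric] sum_subtractf sum.distrib)
  also have "\<dots> = (a - b)^2 * (\<Sum>j\<in>UNIV.
      v (g j) * w j - v j * w (g j) - 2 * (v (g (g j)) * w j) + 2 * (v j * w (g (g j))))"
    by (simp only: sum_brk sum_brk_swap comp_apply sum_subtractf sum.distrib sum_distrib_left[symmetric])
  finally show ?thesis .
qed

lemma phi_xy_cyc5_consecutive:
  fixes t :: "'n::finite"
  assumes "distinct [t, u1, u2, u3, u4]"
  shows "phi_xy (kL_tri a b) (kL_tri a b) (cyc5 t u1 u2 u3 u4 \<circ> inv (cyc3 t u1 u2)) (cyc3 t u1 u2)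
      v1 v2 v3 l = weight3 a b t u3 u4 l * tri_coeff a b t u3 u4 t u1 u2 v1 v2 v3"
proof -
  have "distinct [t, u1, u2]" "distinct [t, u3, u4]"
    using assms by auto
  moreover have "cyc5 t u1 u2 u3 u4 \<circ> inv (cyc3 t u1 u2) = cyc3 t u3 u4"
    using cyc3_comp_cyc3[OF assms, symmetric] cyc3_permutes[OF \<open>distinct [t, u1, u2]\<close>]
    by (simp add: comp_assoc permutes_inv_o(1))
  ultimately show ?thesis
    by (simp add: phi_xy_cyc3)
qed

lemma phi_cyc5_as_sum:
  fixes e0 :: "'n::finite"
  assumes d: "distinct [e0, e1, e2, e3, e4]"
  defines "g \<equiv> cyc5 e0 e1 e2 e3 e4"
  shows "phi (kL_tri a b) (kL_tri a b) g v1 v2 v3 l = (\<Sum>t\<in>{e0, e1, e2, e3, e4}.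
    weight3 a b t (g (g (g t))) (g (g (g (g t)))) l
    * tri_coeff a b t (g (g (g t))) (g (g (g (g t)))) t (g t) (g (g t)) v1 v2 v3)"
proof -
  let ?F = "\<lambda>y. phi_xy (kL_tri a b) (kL_tri a b) (g \<circ> inv y) y v1 v2 v3 l"
  let ?E = "{e0, e1, e2, e3, e4}"
  define c where "c t = cyc3 t (g t) (g (g t))" for t
  have support: "y \<in> c ` ?E" if nonzero: "?F y \<noteq> 0" for y
  proof -
    obtain t y1 y2 x1 x2 where dt: "distinct [t, y1, y2, x1, x2]" and y: "y = cyc3 t y1 y2"
      and gt: "g = cyc5 t y1 y2 x1 x2"
      using phi_xy_nonzero[OF nonzero] by blast
    have gt1: "g t = y1" and "g y1 = y2"
      using dt by (auto simp: gt cyc5_def)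
    moreover have "t \<in> ?E"
    proof (rule ccontr)
      assume "t \<notin> ?E"
      then have "g t = t"
        by (simp add: g_def cyc5_def)
      with gt1 dt show False
        by simp
    qed
    ultimately show ?thesis
      using y by (auto simp: c_def)
  qed
  have dist_c: "distinct [t, g t, g (g t)]" if "t \<in> ?E" for t
    using that d by (auto simp: g_def cyc5_def)
  have "c e0 = cyc3 e0 e1 e2" "c e1 = cyc3 e1 e2 e3" "c e2 = cyc3 e2 e3 e4"
    "c e3 = cyc3 e3 e4 e0" "c e4 = cyc3 e4 e0 e1"
    using d by (auto simp: c_def g_def cyc5_def)
  then have "distinct (map c [e0, e1, e2, e3, e4])"
    using d by (auto simp: cyc3_def dest: fun_cong[where x = e0] fun_cong[where x = e1]
      fun_cong[where x = e2] fun_cong[where x = e3] fun_cong[where x = e4])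
  then have "inj_on c (set [e0, e1, e2, e3, e4])"
    by (simp only: distinct_map)
  then have inj: "inj_on c ?E"
    by simp
  have "phi (kL_tri a b) (kL_tri a b) g v1 v2 v3 l = (\<Sum>y\<in>c ` ?E. ?F y)"
    unfolding phi_def using support dist_c
    by (intro sum.mono_neutral_right) (auto simp: c_def intro!: cyc3_permutes)
  also have "\<dots> = (\<Sum>t\<in>?E. ?F (c t))"
    by (rule sum.reindex[OF inj, unfolded comp_def])
  also have "\<dots> = (\<Sum>t\<in>?E. weight3 a b t (g (g (g t))) (g (g (g (g t)))) l
    * tri_coeff a b t (g (g (g t))) (g (g (g (g t)))) t (g t) (g (g t)) v1 v2 v3)"
  proof (rule sum.cong[OF refl])
    fix t assume "t \<in> ?E"
    then obtain u1 u2 u3 u4 where du: "distinct [t, u1, u2, u3, u4]" and gu: "g = cyc5 t u1 u2 u3 u4"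
      by (rule cyc5_rotate_to[OF d, folded g_def])
    have "g t = u1" "g u1 = u2" "g u2 = u3" "g u3 = u4"
      using du by (auto simp: gu cyc5_def)
    then show "?F (c t) = weight3 a b t (g (g (g t))) (g (g (g (g t)))) l
        * tri_coeff a b t (g (g (g t))) (g (g (g (g t)))) t (g t) (g (g t)) v1 v2 v3"
      using phi_xy_cyc5_consecutive[OF du] by (simp add: c_def gu)
  qed
  finally show ?thesis .
qed

lemma tri_sum_cyc5_eq_psi:
  fixes e0 :: "'n::finite"
  assumes d: "distinct [e0, e1, e2, e3, e4]"
  defines "g \<equiv> cyc5 e0 e1 e2 e3 e4"
  shows "(\<Sum>t\<in>{e0, e1, e2, e3, e4}. weight3 a b t (g (g (g t))) (g (g (g (g t)))) l
    * tri_coeff a b t (g (g (g t))) (g (g (g (g t)))) t (g t) (g (g t)) v1 v2 v3)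
    = 2 * psi (kC_penta a b) g v1 v2 v3 l"
proof -
  let ?E = "{e0, e1, e2, e3, e4}"
  have is5: "is_5cycle g"
    using d is_5cycle_iff g_def by blast
  have kC: "kC_penta a b g v w = (a - b)^2 * (\<Sum>t\<in>?E.
      v (g t) * w t - v t * w (g t) - 2 * (v (g (g t)) * w t) + 2 * (v t * w (g (g t))))" for v w
    unfolding kC_penta_5cycle[OF is5]
    by (intro arg_cong2[where f = "(*)"] refl sum.mono_neutral_right)
      (auto simp: g_def cyc5_def)
  have act: "act g v = (\<lambda>m. v (cyc5 e4 e3 e2 e1 e0 m))" for v
    using d by (simp add: act_def g_def inv_cyc5)
  have [simp]: "e0 \<noteq> e1" "e0 \<noteq> e2" "e0 \<noteq> e3" "e0 \<noteq> e4" "e1 \<noteq> e0" "e1 \<noteq> e2"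
    "e1 \<noteq> e3" "e1 \<noteq> e4" "e2 \<noteq> e0" "e2 \<noteq> e1" "e2 \<noteq> e3" "e2 \<noteq> e4" "e3 \<noteq> e0"
    "e3 \<noteq> e1" "e3 \<noteq> e2" "e3 \<noteq> e4" "e4 \<noteq> e0" "e4 \<noteq> e1" "e4 \<noteq> e2" "e4 \<noteq> e3"
    using d by auto
  have [simp]: "g e0 = e1" "g e1 = e2" "g e2 = e3" "g e3 = e4" "g e4 = e0"
    by (simp_all add: g_def cyc5_def)
  note defs = psi_def kC act cyc5_def tri_coeff_def alt3_def weight3_def cyc3_def
  consider "l = e0" | "l = e1" | "l = e2" | "l = e3" | "l = e4" | "l \<notin> ?E"
    by blast
  then show ?thesis
  proof cases
    case 1
    show ?thesis by (simp add: 1 defs) algebra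
  next
    case 2
    show ?thesis by (simp add: 2 defs) algebra
  next
    case 3
    show ?thesis by (simp add: 3 defs) algebra
  next
    case 4
    show ?thesis by (simp add: 4 defs) algebra
  next
    case 5
    show ?thesis by (simp add: 5 defs) algebra
  next
    case 6
    then have [simp]: "l \<noteq> e0" "l \<noteq> e1" "l \<noteq> e2" "l \<noteq> e3" "l \<noteq> e4"
      by auto
    show ?thesis by (simp add: defs) algebra
  qed
qed

lemma phi_cyc5:
  fixes e0 :: "'n::finite"
  assumes "distinct [e0, e1, e2, e3, e4]"
  shows "phi (kL_tri a b) (kL_tri a b) (cyc5 e0 e1 e2 e3 e4) v1 v2 v3 l
    = 2 * psi (kC_penta a b) (cyc5 e0 e1 e2 e3 e4) v1 v2 v3 l"
  unfolding phi_cyc5_as_sum[OF assms] by (rule tri_sum_cyc5_eq_psi[OF assms])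

lemma kC_penta_not_5cycle: "\<not> is_5cycle g \<Longrightarrow> kC_penta a b g v w = 0"
  by (simp add: kC_penta_def kC_basis_def)

lemma phi_not_5cycle:
  fixes g :: "'n::finite \<Rightarrow> 'n"
  assumes "\<not> is_5cycle g"
  shows "phi (kL_tri a b) (kL_tri a b) g v1 v2 v3 l = 0"
proof -
  have "phi_xy (kL_tri a b) (kL_tri a b) (g \<circ> inv y) y v1 v2 v3 l = 0" for y
  proof (rule ccontr)
    assume "phi_xy (kL_tri a b) (kL_tri a b) (g \<circ> inv y) y v1 v2 v3 l \<noteq> 0"
    then obtain t y1 y2 x1 x2 where "distinct [t, y1, y2, x1, x2]" "g = cyc5 t y1 y2 x1 x2"
      by (rule phi_xy_nonzero)
    with assms show False
      unfolding is_5cycle_iff by blast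
  qed
  then show ?thesis
    by (simp add: phi_def)
qed

theorem proposition7p5:
  fixes a b :: complex
    and g :: "'n::finite \<Rightarrow> 'n"
    and v1 v2 v3 :: "'n \<Rightarrow> complex"
  assumes "card (UNIV :: 'n set) \<ge> 3"
    and "g permutes (UNIV :: 'n set)"
  shows "phi (kL_tri a b) (kL_tri a b) g v1 v2 v3 = (\<lambda>l. 2 * psi (kC_penta a b) g v1 v2 v3 l)"
proof
  fix l
  show "phi (kL_tri a b) (kL_tri a b) g v1 v2 v3 l = 2 * psi (kC_penta a b) g v1 v2 v3 l"
  proof (cases "is_5cycle g")
    case True
    then obtain e0 e1 e2 e3 e4 where "distinct [e0, e1, e2, e3, e4]" "g = cyc5 e0 e1 e2 e3 e4"
      unfolding is_5cycle_iff by blast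
    then show ?thesis
      by (simp add: phi_cyc5)
  next
    case False
    then show ?thesis
      by (simp add: phi_not_5cycle psi_def kC_penta_not_5cycle)
  qed
qed

end
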